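(* Let $q,r,\nu$ be positive integers with $\nu\le q$. Then the matrix $K(z)=I_\nu\otimes F(z)+S_\nu\otimes F'(z)\in\mathbb{C}^{\nu r\times\nu(r-1)}$ has rank $\nu(r-1)$ and satisfies $\mathcal{N}^0(z)K(z)=0$ for all $z$; in other words, the columns of $K(z)$ form a basis of the kernel of $\mathcal{N}^0(z)$. (For $r=1$, $K(z)$ is empty and by convention its columns span $\{0\}$.)
   Context: Matrix indices start at $0$. $u(z)=(1,z,\dots,z^{q-1})^\top$, $w(z)=(1,z,\dots,z^{r-1})$, $M(z)=u(z)w(z)\in\mathbb{C}^{q\times r}$ and $\mathcal{N}^0(z)=\big(M(z),\frac{1}{1!}M'(z),\dots,\frac{1}{(\nu-1)!}M^{(\nu-1)}(z)\big)\in\mathbb{C}^{q\times\nu r}$. $F(z)\in\mathbb{C}^{r\times(r-1)}$ has entries $F_{ii}=-z$, $F_{i+1,i}=1$, and $0$ otherwise; $F'(z)$ is its derivative in $z$. $S_\nu$ is the $\nu\times\nu$ shift matrix with $(S_\nu)_{ij}=\delta_{i+1,j}$. Thus $K(z)$ is block upper bidiagonal with blocks $F(z)$ on the diagonal and $F'(z)$ on the block superdiagonal. *)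

theory Defs
  imports Complex_Main "HOL-Analysis.Derivative" "Jordan_Normal_Form.DL_Rank" "Jordan_Normal_Form.Matrix_Kernel"
begin

definition kron :: "'a :: times mat \<Rightarrow> 'a mat \<Rightarrow> 'a mat" where
  "kron A B = mat (dim_row A * dim_row B) (dim_col A * dim_col B)
     (\<lambda>(i,j). A $$ (i div dim_row B, j div dim_col B) * B $$ (i mod dim_row B, j mod dim_col B))"

definition Mmat :: "nat \<Rightarrow> nat \<Rightarrow> complex \<Rightarrow> complex mat" where
  "Mmat q r z = mat q 1 (\<lambda>(i,_). z ^ i) * mat 1 r (\<lambda>(_,k). z ^ k)"

text \<open>N^0(z) = (M(z), M'(z)/1!, ..., M^(nu-1)(z)/(nu-1)!), a q x (nu r) matrix;
  derivatives are taken entrywise.\<close>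
definition N0 :: "nat \<Rightarrow> nat \<Rightarrow> nat \<Rightarrow> complex \<Rightarrow> complex mat" where
  "N0 q r \<nu> z = mat q (\<nu> * r)
     (\<lambda>(i,j). (deriv ^^ (j div r)) (\<lambda>w. Mmat q r w $$ (i, j mod r)) z / fact (j div r))"

definition Fmat :: "nat \<Rightarrow> complex \<Rightarrow> complex mat" where
  "Fmat r z = mat r (r - 1) (\<lambda>(i,j). if i = j then - z else if i = j + 1 then 1 else 0)"

definition Fderiv :: "nat \<Rightarrow> complex \<Rightarrow> complex mat" where
  "Fderiv r z = mat r (r - 1) (\<lambda>(i,j). deriv (\<lambda>w. Fmat r w $$ (i,j)) z)"

definition shift_mat :: "nat \<Rightarrow> complex mat" where
  "shift_mat \<nu> = mat \<nu> \<nu> (\<lambda>(i,j). if j = i + 1 then 1 else 0)"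

definition Kmat :: "nat \<Rightarrow> nat \<Rightarrow> complex \<Rightarrow> complex mat" where
  "Kmat \<nu> r z = kron (1\<^sub>m \<nu>) (Fmat r z) + kron (shift_mat \<nu>) (Fderiv r z)"

end

theory Submission
  imports Defs
begin

text \<open>
  Index the \<open>\<nu> r\<close> columns of \<open>N0\<close> and rows of \<open>K\<close> by pairs \<open>(c, k)\<close> with \<open>c < \<nu>\<close>, \<open>k < r\<close>.
  Column \<open>(c, m)\<close> of \<open>K\<close> is \<open>-z e(c,m) + e(c,m+1) - e(c-1,m)\<close>, and \<open>N0\<close> has the entry
  \<open>binom(i+k, c) z^(i+k-c)\<close> in row \<open>i\<close>, column \<open>(c, k)\<close>; so \<open>N0 K = 0\<close> is Pascal's rule.
  The last nonzero entry of column \<open>(c, m)\<close> of \<open>K\<close> lies in row \<open>(c, m+1)\<close>, so these rows are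
  distinct and none of them is a row \<open>(c, 0)\<close>. Appending the unit columns \<open>e(c,0)\<close> to \<open>K\<close> thus
  gives a square matrix with distinct pivot rows, hence with trivial kernel. Consequently \<open>K\<close> has
  full column rank, and every kernel vector of \<open>N0\<close> is \<open>K x + \<Sum>\<^sub>c y\<^sub>c e(c,0)\<close>. Applying \<open>N0\<close>
  leaves \<open>\<Sum>\<^sub>c y\<^sub>c binom(i, c) z^(i-c) = 0\<close> for all \<open>i < q\<close>, a unitriangular system in the rows
  \<open>i < \<nu> \<le> q\<close>; so \<open>y = 0\<close>.
\<close>

unbundle no vec_syntax \<comment> \<open>the vector indexing of HOL-Analysis clashes with that of Matrix\<close>

section \<open>Linear algebra and index arithmetic\<close>

lemma higher_deriv_power:
  "(deriv ^^ k) (\<lambda>w::'a::real_normed_field. w ^ n) = (\<lambda>w. of_nat (fact k * (n choose k)) * w ^ (n - k))"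
proof (induction k)
  case 0
  then show ?case by simp
next
  case (Suc k)
  have "(n - k) * (n choose k) = Suc k * (n choose Suc k)"
    by (metis binomial_absorb_comp binomial_absorption)
  then have coeff: "fact k * (n choose k) * (n - k) = fact (Suc k) * (n choose Suc k)"
    by (simp add: algebra_simps)
  have "deriv (\<lambda>w::'a. of_nat (fact k * (n choose k)) * w ^ (n - k))
      = (\<lambda>w. of_nat (fact (Suc k) * (n choose Suc k)) * w ^ (n - Suc k))"
  proof
    fix w :: 'a
    have "deriv (\<lambda>w. of_nat (fact k * (n choose k)) * w ^ (n - k)) w
        = of_nat (fact k * (n choose k)) * (of_nat (n - k) * w ^ (n - k - 1))"
      by (rule DERIV_imp_deriv) (auto intro!: derivative_eq_intros)
    also have "\<dots> = of_nat (fact k * (n choose k) * (n - k)) * w ^ (n - Suc k)"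
      by (simp only: of_nat_mult mult.assoc) (simp add: diff_diff_add)
    finally show "deriv (\<lambda>w. of_nat (fact k * (n choose k)) * w ^ (n - k)) w
        = of_nat (fact (Suc k) * (n choose Suc k)) * w ^ (n - Suc k)"
      by (simp only: coeff)
  qed
  then show ?case
    by (simp only: funpow.simps comp_apply Suc.IH)
qed

text \<open>Leibniz' rule for \<open>w^(n+1) = w * w^n\<close>, divided by \<open>c!\<close> as in \<open>N0_entry\<close>.\<close>

lemma binomial_power_Suc:
  fixes z :: "'a::comm_ring_1"
  shows "of_nat (Suc n choose c) * z ^ (Suc n - c)
    = z * (of_nat (n choose c) * z ^ (n - c))
      + (if 0 < c then of_nat (n choose (c - 1)) * z ^ (n - (c - 1)) else 0)"
proof (cases c)
  case 0
  then show ?thesis by simp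
next
  case (Suc d)
  show ?thesis
  proof (cases "d < n")
    case True
    then have "z ^ (n - d) = z * z ^ (n - Suc d)"
      by (metis Suc_diff_Suc power_Suc)
    then show ?thesis
      using Suc by (simp add: algebra_simps)
  next
    case False
    then show ?thesis
      using Suc by (simp add: binomial_eq_0)
  qed
qed

lemma less_mult_blockE:
  fixes j a b :: nat
  assumes "j < a * b"
  obtains c m where "c < a" "m < b" "j = c * b + m"
proof
  have "0 < b"
    using assms by (cases b) auto
  then show "j mod b < b" "j = j div b * b + j mod b"
    by simp_all
  show "j div b < a"
    using assms by (simp add: less_mult_imp_div_less)
qed

lemma less_mult_add_cases:
  fixes j a s :: nat
  assumes "j < a * s + a"
  obtains (block) c m where "c < a" "m < s" "j = c * s + m"
    | (tail) c where "c < a" "j = a * s + c"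
proof (cases "j < a * s")
  case True
  then show thesis
    using less_mult_blockE block by blast
next
  case False
  then show thesis
    using tail[of "j - a * s"] assms by simp
qed

lemma block_index_div_mod:
  fixes c k r :: nat
  assumes "k < r"
  shows "(c * r + k) div r = c" "(c * r + k) mod r = k"
  using assms by auto

lemma block_index_eq_iff:
  fixes a c k m r :: nat
  assumes "k < r" "m < r"
  shows "a * r + k = c * r + m \<longleftrightarrow> a = c \<and> k = m"
proof
  assume "a * r + k = c * r + m"
  then show "a = c \<and> k = m"
    using block_index_div_mod[OF assms(1), of a] block_index_div_mod[OF assms(2), of c] by metis
qed auto

lemma block_index_less:
  fixes a b c m :: nat
  assumes "c < a" "m < b"
  shows "c * b + m < a * b"
proof -
  have "c * b + m < c * b + b"
    using assms by simp
  also have "\<dots> \<le> a * b"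
    using assms by (metis Suc_leI add.commute mult_Suc mult_le_mono1)
  finally show ?thesis .
qed

lemma sum_mult_delta:
  fixes f :: "'b \<Rightarrow> 'a::semiring_0"
  assumes "finite A"
  shows "(\<Sum>l\<in>A. f l * (if l = p then a else 0)) = (if p \<in> A then f p * a else 0)"
proof -
  have "(\<Sum>l\<in>A. f l * (if l = p then a else 0)) = (\<Sum>l\<in>A. if l = p then f l * a else 0)"
    by (rule sum.cong) auto
  then show ?thesis
    using assms by (simp add: sum.delta)
qed

lemma index_mult_mat_sum:
  assumes "A \<in> carrier_mat n k" "B \<in> carrier_mat k m" "i < n" "j < m"
  shows "(A * B) $$ (i, j) = (\<Sum>l<k. A $$ (i, l) * B $$ (l, j))"
  using assms by (auto simp: scalar_prod_def lessThan_atLeast0 intro!: sum.cong)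

lemma kernel_trivial_by_pivots:
  fixes A :: "'a::idom mat" and \<rho> :: "nat \<Rightarrow> 'b::linorder"
  assumes A: "A \<in> carrier_mat n m" and x: "x \<in> carrier_vec m" and Ax: "A *\<^sub>v x = 0\<^sub>v n"
    and pivot_row: "\<And>j. j < m \<Longrightarrow> \<sigma> j < n"
    and pivot_inj: "inj_on \<sigma> {..<m}"
    and pivot_nonzero: "\<And>j. j < m \<Longrightarrow> A $$ (\<sigma> j, j) \<noteq> 0"
    and pivot_greatest: "\<And>i j. i < n \<Longrightarrow> j < m \<Longrightarrow> A $$ (i, j) \<noteq> 0 \<Longrightarrow> i \<noteq> \<sigma> j \<Longrightarrow> \<rho> i < \<rho> (\<sigma> j)"
  shows "x = 0\<^sub>v m"
proof (rule ccontr)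
  define S where "S = {j. j < m \<and> x $ j \<noteq> 0}"
  assume "x \<noteq> 0\<^sub>v m"
  then have "S \<noteq> {}"
    using x unfolding S_def by (auto simp: vec_eq_iff)
  moreover have "finite S"
    unfolding S_def by auto
  ultimately have "Max ((\<lambda>k. \<rho> (\<sigma> k)) ` S) \<in> (\<lambda>k. \<rho> (\<sigma> k)) ` S"
    by (intro Max_in) auto
  then obtain j where "j \<in> S" and j_max: "\<rho> (\<sigma> j) = Max ((\<lambda>k. \<rho> (\<sigma> k)) ` S)"
    by force
  then have j: "j < m" "x $ j \<noteq> 0"
    unfolding S_def by auto
  have other_terms: "A $$ (\<sigma> j, k) * x $ k = 0" if "k < m" "k \<noteq> j" for k
  proof (rule ccontr)
    assume "A $$ (\<sigma> j, k) * x $ k \<noteq> 0"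
    then have "\<rho> (\<sigma> j) < \<rho> (\<sigma> k)" and "k \<in> S"
      using pivot_greatest[OF pivot_row[OF j(1)] that(1)] inj_onD[OF pivot_inj, of j k] that j
      unfolding S_def by auto
    then show False
      using j_max Max_ge[OF \<open>finite S\<close>[THEN finite_imageI], of "\<rho> (\<sigma> k)"] by fastforce
  qed
  have "0 = (A *\<^sub>v x) $ \<sigma> j"
    using Ax pivot_row[OF j(1)] by simp
  also have "\<dots> = (\<Sum>k<m. A $$ (\<sigma> j, k) * x $ k)"
    using A x pivot_row[OF j(1)] by (auto simp: scalar_prod_def lessThan_atLeast0)
  also have "\<dots> = A $$ (\<sigma> j, j) * x $ j"
    using j(1) by (subst sum.remove[of _ j]) (simp_all add: other_terms sum.neutral)
  finally show False
    using pivot_nonzero[OF j(1)] j(2) by simp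
qed

lemma distinct_cols_if_kernel_trivial:
  fixes A :: "'a::comm_ring_1 mat"
  assumes A: "A \<in> carrier_mat n m"
    and kernel: "\<And>x. x \<in> carrier_vec m \<Longrightarrow> A *\<^sub>v x = 0\<^sub>v n \<Longrightarrow> x = 0\<^sub>v m"
  shows "distinct (cols A)"
  unfolding distinct_conv_nth
proof (intro allI impI)
  fix i j assume "i < length (cols A)" "j < length (cols A)" "i \<noteq> j"
  then have ij: "i < m" "j < m" "i \<noteq> j"
    using A by auto
  have unit_col: "A *\<^sub>v unit_vec m k = col A k" if "k < m" for k
    using A that by (intro eq_vecI) auto
  define x where "x = (unit_vec m i - unit_vec m j :: 'a vec)"
  have "x \<noteq> 0\<^sub>v m"
    using ij unfolding x_def by (auto simp: vec_eq_iff)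
  then have "A *\<^sub>v x \<noteq> 0\<^sub>v n"
    using kernel unfolding x_def by auto
  moreover have "A *\<^sub>v x = col A i - col A j"
    using A ij unfolding x_def by (simp add: mult_minus_distrib_mat_vec unit_col)
  ultimately show "cols A ! i \<noteq> cols A ! j"
    using A ij by auto
qed

lemma rank_eq_dim_col_if_kernel_trivial:
  fixes A :: "'a::field mat"
  assumes A: "A \<in> carrier_mat n m"
    and kernel: "\<And>x. x \<in> carrier_vec m \<Longrightarrow> A *\<^sub>v x = 0\<^sub>v n \<Longrightarrow> x = 0\<^sub>v m"
  shows "vec_space.rank n A = m"
proof -
  interpret vec_space "TYPE('a)" n .
  have distinct: "distinct (cols A)"
    by (rule distinct_cols_if_kernel_trivial[OF A kernel])
  have "lin_indpt (set (cols A))"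
  proof
    assume "lin_dep (set (cols A))"
    then show False
      using lin_depE[OF A _ distinct] kernel by metis
  qed
  then show ?thesis
    using lin_indpt_full_rank[OF A distinct] by blast
qed

lemma surj_if_kernel_trivial:
  fixes A :: "'a::field mat"
  assumes A: "A \<in> carrier_mat n n"
    and kernel: "\<And>x. x \<in> carrier_vec n \<Longrightarrow> A *\<^sub>v x = 0\<^sub>v n \<Longrightarrow> x = 0\<^sub>v n"
    and v: "v \<in> carrier_vec n"
  obtains w where "w \<in> carrier_vec n" "A *\<^sub>v w = v"
proof -
  have "det A \<noteq> 0"
    using det_0_iff_vec_prod_zero[OF A] kernel by blast
  from det_non_zero_imp_unit[OF A this, of "()"]
  obtain B where B: "B \<in> carrier_mat n n" and AB: "A * B = 1\<^sub>m n"
    by (auto simp: Units_def ring_mat_def)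
  show thesis
  proof
    show "B *\<^sub>v v \<in> carrier_vec n"
      using B v by simp
    show "A *\<^sub>v (B *\<^sub>v v) = v"
      using assoc_mult_mat_vec[OF A B v] AB v by simp
  qed
qed

definition append_cols :: "'a::zero mat \<Rightarrow> 'a mat \<Rightarrow> 'a mat" where
  "append_cols A B = four_block_mat A B (0\<^sub>m 0 (dim_col A)) (0\<^sub>m 0 (dim_col B))"

lemma append_cols_carrier:
  "A \<in> carrier_mat n m1 \<Longrightarrow> B \<in> carrier_mat n m2 \<Longrightarrow> append_cols A B \<in> carrier_mat n (m1 + m2)"
  unfolding append_cols_def by (auto simp: four_block_mat_def)

lemma index_append_cols:
  assumes "A \<in> carrier_mat n m1" "B \<in> carrier_mat n m2" "i < n" "j < m1 + m2"
  shows "append_cols A B $$ (i, j) = (if j < m1 then A $$ (i, j) else B $$ (i, j - m1))"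
  using assms unfolding append_cols_def by simp

lemma append_cols_mult_vec:
  fixes A :: "'a::comm_ring_1 mat"
  assumes A: "A \<in> carrier_mat n m1" and B: "B \<in> carrier_mat n m2"
    and x: "x \<in> carrier_vec m1" and y: "y \<in> carrier_vec m2"
  shows "append_cols A B *\<^sub>v (x @\<^sub>v y) = A *\<^sub>v x + B *\<^sub>v y"
proof -
  have "append_cols A B *\<^sub>v (x @\<^sub>v y) = (A *\<^sub>v x + B *\<^sub>v y) @\<^sub>v (0\<^sub>m 0 m1 *\<^sub>v x + 0\<^sub>m 0 m2 *\<^sub>v y)"
    unfolding append_cols_def using four_block_mat_mult_vec[OF A B zero_carrier_mat zero_carrier_mat x y] A B
    by simp
  then show ?thesis
    using A B by (auto intro!: eq_vecI)
qed

lemma kernel_trivial_if_append_cols: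
  fixes A :: "'a::comm_ring_1 mat"
  assumes A: "A \<in> carrier_mat n m1" and B: "B \<in> carrier_mat n m2"
    and kernel: "\<And>w. w \<in> carrier_vec (m1 + m2) \<Longrightarrow> append_cols A B *\<^sub>v w = 0\<^sub>v n \<Longrightarrow> w = 0\<^sub>v (m1 + m2)"
    and x: "x \<in> carrier_vec m1" and Ax: "A *\<^sub>v x = 0\<^sub>v n"
  shows "x = 0\<^sub>v m1"
proof -
  have "append_cols A B *\<^sub>v (x @\<^sub>v 0\<^sub>v m2) = 0\<^sub>v n"
    using append_cols_mult_vec[OF A B x] Ax B by auto
  then have x_0: "x @\<^sub>v 0\<^sub>v m2 = 0\<^sub>v (m1 + m2)"
    using kernel x by simp
  show ?thesis
  proof (rule eq_vecI)
    fix i assume "i < dim_vec (0\<^sub>v m1 :: 'a vec)"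
    then have "x $ i = (x @\<^sub>v 0\<^sub>v m2) $ i"
      using x by simp
    with \<open>i < dim_vec (0\<^sub>v m1)\<close> show "x $ i = 0\<^sub>v m1 $ i"
      unfolding x_0 by simp
  qed (use x in simp)
qed

lemma col_space_eq_mat_kernel:
  fixes N K R :: "'a::field mat"
  assumes N: "N \<in> carrier_mat k n" and K: "K \<in> carrier_mat n m1" and R: "R \<in> carrier_mat n m2"
    and dims: "m1 + m2 = n"
    and NK: "N * K = 0\<^sub>m k m1"
    and NR: "\<And>y. y \<in> carrier_vec m2 \<Longrightarrow> (N * R) *\<^sub>v y = 0\<^sub>v k \<Longrightarrow> y = 0\<^sub>v m2"
    and KR: "\<And>w. w \<in> carrier_vec (m1 + m2) \<Longrightarrow> append_cols K R *\<^sub>v w = 0\<^sub>v n \<Longrightarrow> w = 0\<^sub>v (m1 + m2)"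
  shows "vec_space.col_space n K = mat_kernel N"
proof -
  have N_kills_K: "N *\<^sub>v (K *\<^sub>v x) = 0\<^sub>v k" if "x \<in> carrier_vec m1" for x
    using that by (auto simp: assoc_mult_mat_vec[symmetric, OF N K] NK)
  have col_space: "vec_space.col_space n K = {v \<in> carrier_vec n. \<exists>x \<in> carrier_vec m1. K *\<^sub>v x = v}"
    using vec_space.col_space_eq[OF K] K by simp
  show ?thesis
  proof
    show "vec_space.col_space n K \<subseteq> mat_kernel N"
      unfolding col_space using N_kills_K mat_kernelI[OF N] by blast
  next
    show "mat_kernel N \<subseteq> vec_space.col_space n K"
    proof
      fix v assume "v \<in> mat_kernel N"
      then have v: "v \<in> carrier_vec n" and Nv: "N *\<^sub>v v = 0\<^sub>v k"
        using mat_kernelD[OF N] by auto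
      obtain w where w: "w \<in> carrier_vec n" and KRw: "append_cols K R *\<^sub>v w = v"
        using surj_if_kernel_trivial[OF append_cols_carrier[OF K R, unfolded dims] KR[unfolded dims] v] .
      define x y where "x = vec_first w m1" and "y = vec_last w m2"
      have x: "x \<in> carrier_vec m1" and y: "y \<in> carrier_vec m2"
        unfolding x_def y_def by simp_all
      have v_eq: "v = K *\<^sub>v x + R *\<^sub>v y"
        using KRw append_cols_mult_vec[OF K R x y] vec_first_last_append[of w m1 m2] w dims
        unfolding x_def y_def by simp
      have "(N * R) *\<^sub>v y = N *\<^sub>v v"
        using N K R x y N_kills_K[OF x]
        by (simp add: v_eq mult_add_distrib_mat_vec assoc_mult_mat_vec)
      then have "y = 0\<^sub>v m2"
        using NR y Nv by simp
      then have "v = K *\<^sub>v x"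
        using v_eq K R x by auto
      then show "v \<in> vec_space.col_space n K"
        unfolding col_space using v x by blast
    qed
  qed
qed

section \<open>The product \<open>N\<^sup>0 K\<close>\<close>

lemma N0_carrier: "N0 q r \<nu> z \<in> carrier_mat q (\<nu> * r)"
  unfolding N0_def by simp

lemma N0_entry:
  assumes "i < q" "c < \<nu>" "k < r"
  shows "N0 q r \<nu> z $$ (i, c * r + k) = of_nat ((i + k) choose c) * z ^ (i + k - c)"
proof -
  have "Mmat q r w $$ (i, k) = w ^ (i + k)" for w
    using assms unfolding Mmat_def by (simp add: scalar_prod_def power_add)
  then have "N0 q r \<nu> z $$ (i, c * r + k) = (deriv ^^ c) (\<lambda>w. w ^ (i + k)) z / fact c"
    using assms block_index_less[of c \<nu> k r] by (simp add: N0_def)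
  then show ?thesis
    by (simp add: higher_deriv_power)
qed

lemma Fmat_entry:
  assumes "k < r" "m < r - 1"
  shows "Fmat r w $$ (k, m) = (if k = m then - w else if k = m + 1 then 1 else 0)"
  using assms unfolding Fmat_def by simp

lemma Fderiv_entry:
  assumes "k < r" "m < r - 1"
  shows "Fderiv r z $$ (k, m) = (if k = m then - 1 else 0)"
proof -
  have "deriv (\<lambda>w. Fmat r w $$ (k, m)) z = (if k = m then - 1 else 0)"
    using assms by (simp add: Fmat_entry)
  then show ?thesis
    using assms unfolding Fderiv_def by simp
qed

lemma Kmat_carrier: "Kmat \<nu> r z \<in> carrier_mat (\<nu> * r) (\<nu> * (r - 1))"
  unfolding Kmat_def kron_def Fmat_def Fderiv_def shift_mat_def by auto

lemma Kmat_column: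
  assumes c: "c < \<nu>" and m: "m < r - 1" and l: "l < \<nu> * r"
  shows "Kmat \<nu> r z $$ (l, c * (r - 1) + m) =
    (if l = c * r + m then - z else 0) + (if l = c * r + (m + 1) then 1 else 0)
      + (if 0 < c \<and> l = (c - 1) * r + m then - 1 else 0)"
proof -
  obtain a k where a: "a < \<nu>" and k: "k < r" and l_eq: "l = a * r + k"
    using less_mult_blockE[OF l] .
  have dims: "dim_row (Fmat r z) = r" "dim_col (Fmat r z) = r - 1"
    "dim_row (Fderiv r z) = r" "dim_col (Fderiv r z) = r - 1"
    "dim_row (shift_mat \<nu>) = \<nu>" "dim_col (shift_mat \<nu>) = \<nu>"
    by (simp_all add: Fmat_def Fderiv_def shift_mat_def)
  have idx: "l div r = a" "l mod r = k" "(c * (r - 1) + m) div (r - 1) = c" "(c * (r - 1) + m) mod (r - 1) = m"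
    using k m by (simp_all add: l_eq)
  have "Kmat \<nu> r z $$ (l, c * (r - 1) + m)
      = 1\<^sub>m \<nu> $$ (a, c) * Fmat r z $$ (k, m) + shift_mat \<nu> $$ (a, c) * Fderiv r z $$ (k, m)"
    using l m block_index_less[OF c m] by (simp add: Kmat_def kron_def dims idx idx[unfolded One_nat_def])
  also have "\<dots> = (if a = c \<and> k = m then - z else 0) + (if a = c \<and> k = m + 1 then 1 else 0)
      + (if c = a + 1 \<and> k = m then - 1 else 0)"
    using a c k m by (auto simp: Fmat_entry Fderiv_entry shift_mat_def)
  also have "\<dots> = (if l = c * r + m then - z else 0) + (if l = c * r + (m + 1) then 1 else 0)
      + (if 0 < c \<and> l = (c - 1) * r + m then - 1 else 0)"
  proof -
    have "m < r" "m + 1 < r"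
      using m by linarith+
    then have "l = c * r + m \<longleftrightarrow> a = c \<and> k = m"
      and "l = c * r + (m + 1) \<longleftrightarrow> a = c \<and> k = m + 1"
      and "l = (c - 1) * r + m \<longleftrightarrow> a = c - 1 \<and> k = m"
      unfolding l_eq using k block_index_eq_iff by blast+
    then show ?thesis
      by auto
  qed
  finally show ?thesis .
qed

lemma N0_mult_Kmat: "N0 q r \<nu> z * Kmat \<nu> r z = 0\<^sub>m q (\<nu> * (r - 1))"
proof (rule eq_matI)
  fix i j assume "i < dim_row (0\<^sub>m q (\<nu> * (r - 1)) :: complex mat)" "j < dim_col (0\<^sub>m q (\<nu> * (r - 1)) :: complex mat)"
  then have i: "i < q" and j: "j < \<nu> * (r - 1)"
    by auto
  obtain c m where c: "c < \<nu>" and m: "m < r - 1" and j_eq: "j = c * (r - 1) + m"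
    using less_mult_blockE[OF j] .
  have m1: "m < r" "m + 1 < r"
    using m by linarith+
  define N where "N = N0 q r \<nu> z"
  define p1 p2 p3 where "p1 = c * r + m" and "p2 = c * r + (m + 1)" and "p3 = (c - 1) * r + m"
  have column: "Kmat \<nu> r z $$ (l, j) = (if l = p1 then - z else 0) + (if l = p2 then 1 else 0)
      + (if 0 < c \<and> l = p3 then - 1 else 0)" if "l < \<nu> * r" for l
    unfolding j_eq p1_def p2_def p3_def by (rule Kmat_column[OF c m that])
  have p_less: "p1 < \<nu> * r" "p2 < \<nu> * r" "0 < c \<Longrightarrow> p3 < \<nu> * r"
    unfolding p1_def p2_def p3_def
    using block_index_less[OF c m1(1)] block_index_less[OF c m1(2)] block_index_less[of "c - 1" \<nu> m r] c m1
    by auto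
  have N_p1: "N $$ (i, p1) = of_nat ((i + m) choose c) * z ^ (i + m - c)"
    unfolding N_def p1_def using N0_entry[OF i c m1(1)] .
  have N_p2: "N $$ (i, p2) = of_nat (Suc (i + m) choose c) * z ^ (Suc (i + m) - c)"
    unfolding N_def p2_def using N0_entry[OF i c m1(2)] by simp
  have N_p3: "N $$ (i, p3) = of_nat ((i + m) choose (c - 1)) * z ^ (i + m - (c - 1))" if "0 < c"
    unfolding N_def p3_def using N0_entry[OF i _ m1(1), of "c - 1"] c by simp
  have "(N * Kmat \<nu> r z) $$ (i, j) = (\<Sum>l<\<nu> * r. N $$ (i, l) * Kmat \<nu> r z $$ (l, j))"
    unfolding N_def by (rule index_mult_mat_sum[OF N0_carrier Kmat_carrier i j])
  also have "\<dots> = (\<Sum>l<\<nu> * r. N $$ (i, l) * (if l = p1 then - z else 0))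
      + (\<Sum>l<\<nu> * r. N $$ (i, l) * (if l = p2 then 1 else 0))
      + (\<Sum>l<\<nu> * r. N $$ (i, l) * (if 0 < c \<and> l = p3 then - 1 else 0))"
    unfolding sum.distrib[symmetric] distrib_left[symmetric]
    by (intro sum.cong refl) (simp only: column lessThan_iff)
  also have "\<dots> = - z * N $$ (i, p1) + N $$ (i, p2) - (if 0 < c then N $$ (i, p3) else 0)"
    using p_less by (cases "0 < c") (simp_all add: sum_mult_delta)
  also have "\<dots> = 0"
    unfolding N_p1 N_p2 binomial_power_Suc using N_p3 by (cases "0 < c") simp_all
  finally show "(N0 q r \<nu> z * Kmat \<nu> r z) $$ (i, j) = 0\<^sub>m q (\<nu> * (r - 1)) $$ (i, j)"
    using i j unfolding N_def by simp
qed (use N0_carrier[of q r \<nu> z] Kmat_carrier[of \<nu> r z] in auto)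

section \<open>The kernel of \<open>N\<^sup>0\<close>\<close>

definition block_first_mat :: "nat \<Rightarrow> nat \<Rightarrow> 'a::zero_neq_one mat" where
  "block_first_mat \<nu> r = mat (\<nu> * r) \<nu> (\<lambda>(l, c). if l = c * r then 1 else 0)"

lemma block_first_mat_carrier: "block_first_mat \<nu> r \<in> carrier_mat (\<nu> * r) \<nu>"
  unfolding block_first_mat_def by simp

lemma N0_mult_block_first_mat_entry:
  assumes r: "0 < r" and i: "i < q" and c: "c < \<nu>"
  shows "(N0 q r \<nu> z * block_first_mat \<nu> r) $$ (i, c) = of_nat (i choose c) * z ^ (i - c)"
proof -
  have "(N0 q r \<nu> z * block_first_mat \<nu> r) $$ (i, c)
      = (\<Sum>l<\<nu> * r. N0 q r \<nu> z $$ (i, l) * block_first_mat \<nu> r $$ (l, c))"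
    by (rule index_mult_mat_sum[OF N0_carrier block_first_mat_carrier i c])
  also have "\<dots> = (\<Sum>l<\<nu> * r. N0 q r \<nu> z $$ (i, l) * (if l = c * r then 1 else 0))"
    using c by (intro sum.cong refl) (simp add: block_first_mat_def)
  also have "\<dots> = N0 q r \<nu> z $$ (i, c * r + 0)"
    using block_index_less[OF c r] by (simp add: sum_mult_delta)
  also have "\<dots> = of_nat (i choose c) * z ^ (i - c)"
    using N0_entry[OF i c r] by simp
  finally show ?thesis .
qed

lemma N0_mult_block_first_mat_kernel_trivial:
  assumes r: "0 < r" and \<nu>q: "\<nu> \<le> q"
    and y: "y \<in> carrier_vec \<nu>" and Ny: "(N0 q r \<nu> z * block_first_mat \<nu> r) *\<^sub>v y = 0\<^sub>v q"
  shows "y = 0\<^sub>v \<nu>"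
proof (rule kernel_trivial_by_pivots[where \<sigma> = id and \<rho> = "\<lambda>i. - int i"])
  show "N0 q r \<nu> z * block_first_mat \<nu> r \<in> carrier_mat q \<nu>"
    using N0_carrier block_first_mat_carrier by (rule mult_carrier_mat)
  show "(N0 q r \<nu> z * block_first_mat \<nu> r) $$ (id c, c) \<noteq> 0" if "c < \<nu>" for c
    using N0_mult_block_first_mat_entry[OF r _ that] that \<nu>q by simp
  show "- int i < - int (id c)"
    if "i < q" "c < \<nu>" "(N0 q r \<nu> z * block_first_mat \<nu> r) $$ (i, c) \<noteq> 0" "i \<noteq> id c" for i c
    using that N0_mult_block_first_mat_entry[OF r that(1,2)] by (cases "c \<le> i") auto
qed (use y Ny \<nu>q in auto)

lemma Kmat_column_last_nonzero:
  assumes c: "c < \<nu>" and m: "m < r - 1"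
  shows "Kmat \<nu> r z $$ (c * r + (m + 1), c * (r - 1) + m) = 1"
    and "\<And>l. l < \<nu> * r \<Longrightarrow> Kmat \<nu> r z $$ (l, c * (r - 1) + m) \<noteq> 0 \<Longrightarrow> l \<le> c * r + (m + 1)"
proof -
  have less: "c * r + (m + 1) < \<nu> * r"
    using block_index_less[OF c, of "m + 1" r] m by simp
  have below: "(c - 1) * r + m < c * r + (m + 1)" if "0 < c"
    using that by (cases c) auto
  then show "Kmat \<nu> r z $$ (c * r + (m + 1), c * (r - 1) + m) = 1"
    using Kmat_column[OF c m less] by auto
  show "l \<le> c * r + (m + 1)" if "l < \<nu> * r" "Kmat \<nu> r z $$ (l, c * (r - 1) + m) \<noteq> 0" for l
    using that Kmat_column[OF c m that(1)] below by (auto split: if_splits)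
qed

definition Kmat_completion :: "nat \<Rightarrow> nat \<Rightarrow> complex \<Rightarrow> complex mat" where
  "Kmat_completion \<nu> r z = append_cols (Kmat \<nu> r z) (block_first_mat \<nu> r)"

lemma Kmat_completion_carrier: "Kmat_completion \<nu> r z \<in> carrier_mat (\<nu> * r) (\<nu> * (r - 1) + \<nu>)"
  unfolding Kmat_completion_def by (rule append_cols_carrier[OF Kmat_carrier block_first_mat_carrier])

lemma index_Kmat_completion:
  assumes "l < \<nu> * r" and "j < \<nu> * (r - 1) + \<nu>"
  shows "Kmat_completion \<nu> r z $$ (l, j)
    = (if j < \<nu> * (r - 1) then Kmat \<nu> r z $$ (l, j) else if l = (j - \<nu> * (r - 1)) * r then 1 else 0)"
  using assms index_append_cols[OF Kmat_carrier block_first_mat_carrier assms]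
  by (simp add: Kmat_completion_def block_first_mat_def)

text \<open>The row of the last nonzero entry of column \<open>j\<close> of \<open>Kmat_completion\<close>: for \<open>j = c (r-1) + m\<close>
  it is \<open>c r + m + 1\<close>, for the appended column \<open>j = \<nu> (r-1) + c\<close> it is \<open>c r\<close>.\<close>

definition completion_pivot :: "nat \<Rightarrow> nat \<Rightarrow> nat \<Rightarrow> nat" where
  "completion_pivot \<nu> r j = (if j < \<nu> * (r - 1) then (j div (r - 1)) * r + (j mod (r - 1) + 1)
    else (j - \<nu> * (r - 1)) * r)"

lemma completion_pivot_Kmat_column:
  assumes "c < \<nu>" "m < r - 1"
  shows "completion_pivot \<nu> r (c * (r - 1) + m) = c * r + (m + 1)"
  using assms block_index_less[OF assms] unfolding completion_pivot_def by simp

lemma completion_pivot_unit_column: "completion_pivot \<nu> r (\<nu> * (r - 1) + c) = c * r"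
  unfolding completion_pivot_def by simp

lemma inj_on_completion_pivot:
  assumes r: "0 < r"
  shows "inj_on (completion_pivot \<nu> r) {..<\<nu> * (r - 1) + \<nu>}"
proof (rule inj_on_inverseI)
  \<comment> \<open>Pivot rows of the columns of K are never divisible by r, those of the unit columns are.\<close>
  define \<tau> where "\<tau> l = (if l mod r = 0 then \<nu> * (r - 1) + l div r else (l div r) * (r - 1) + (l mod r - 1))" for l
  fix j assume "j \<in> {..<\<nu> * (r - 1) + \<nu>}"
  then consider (block) c m where "c < \<nu>" "m < r - 1" "j = c * (r - 1) + m"
    | (tail) c where "c < \<nu>" "j = \<nu> * (r - 1) + c"
    by (auto elim: less_mult_add_cases)
  then show "\<tau> (completion_pivot \<nu> r j) = j"
  proof cases
    case block
    then have m1: "m + 1 < r"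
      by linarith
    show ?thesis
      unfolding block(3) completion_pivot_Kmat_column[OF block(1,2)] \<tau>_def block_index_div_mod[OF m1]
      by simp
  next
    case tail
    show ?thesis
      unfolding tail(2) completion_pivot_unit_column \<tau>_def using r by simp
  qed
qed

lemma Kmat_completion_kernel_trivial:
  assumes r: "0 < r"
    and w: "w \<in> carrier_vec (\<nu> * (r - 1) + \<nu>)"
    and Pw: "Kmat_completion \<nu> r z *\<^sub>v w = 0\<^sub>v (\<nu> * r)"
  shows "w = 0\<^sub>v (\<nu> * (r - 1) + \<nu>)"
proof (rule kernel_trivial_by_pivots[OF Kmat_completion_carrier w Pw, where \<sigma> = "completion_pivot \<nu> r" and \<rho> = id])
  show "inj_on (completion_pivot \<nu> r) {..<\<nu> * (r - 1) + \<nu>}"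
    by (rule inj_on_completion_pivot[OF r])
  fix j assume j: "j < \<nu> * (r - 1) + \<nu>"
  define P p where "P = Kmat_completion \<nu> r z" and "p = completion_pivot \<nu> r j"
  have "p < \<nu> * r \<and> P $$ (p, j) \<noteq> 0 \<and> (\<forall>i < \<nu> * r. P $$ (i, j) \<noteq> 0 \<longrightarrow> i \<noteq> p \<longrightarrow> i < p)"
    using j
  proof (cases rule: less_mult_add_cases)
    case (block c m)
    then have "m + 1 < r" "j < \<nu> * (r - 1)"
      using block_index_less[of c \<nu> m "r - 1"] by linarith+
    then show ?thesis
      using Kmat_column_last_nonzero[OF block(1,2)] block_index_less[OF block(1), of "m + 1" r] j
      unfolding P_def p_def block(3) completion_pivot_Kmat_column[OF block(1,2)]
      by (auto simp: index_Kmat_completion le_less)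
  next
    case (tail c)
    then show ?thesis
      using block_index_less[OF tail(1) r] j
      unfolding P_def p_def tail(2) completion_pivot_unit_column by (simp add: index_Kmat_completion)
  qed
  then show "completion_pivot \<nu> r j < \<nu> * r" "Kmat_completion \<nu> r z $$ (completion_pivot \<nu> r j, j) \<noteq> 0"
    "\<And>i. i < \<nu> * r \<Longrightarrow> Kmat_completion \<nu> r z $$ (i, j) \<noteq> 0 \<Longrightarrow> i \<noteq> completion_pivot \<nu> r j
      \<Longrightarrow> id i < id (completion_pivot \<nu> r j)"
    unfolding P_def p_def by auto
qed

theorem proposition4p1:
  fixes q r \<nu> :: nat and z :: complex
  assumes "0 < q" and "0 < r" and "0 < \<nu>" and "\<nu> \<le> q"
  shows "vec_space.rank (\<nu> * r) (Kmat \<nu> r z) = \<nu> * (r - 1)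
       \<and> N0 q r \<nu> z * Kmat \<nu> r z = 0\<^sub>m q (\<nu> * (r - 1))
       \<and> vec_space.col_space (\<nu> * r) (Kmat \<nu> r z) = mat_kernel (N0 q r \<nu> z)"
proof (intro conjI)
  have dims: "\<nu> * (r - 1) + \<nu> = \<nu> * r"
    using \<open>0 < r\<close> by (cases r) simp_all
  note completion = Kmat_completion_kernel_trivial[OF \<open>0 < r\<close>, where z = z, unfolded Kmat_completion_def]
  show "vec_space.rank (\<nu> * r) (Kmat \<nu> r z) = \<nu> * (r - 1)"
    by (intro rank_eq_dim_col_if_kernel_trivial[OF Kmat_carrier]
        kernel_trivial_if_append_cols[OF Kmat_carrier block_first_mat_carrier completion])
  show "N0 q r \<nu> z * Kmat \<nu> r z = 0\<^sub>m q (\<nu> * (r - 1))"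
    by (rule N0_mult_Kmat)
  show "vec_space.col_space (\<nu> * r) (Kmat \<nu> r z) = mat_kernel (N0 q r \<nu> z)"
    by (rule col_space_eq_mat_kernel[OF N0_carrier Kmat_carrier block_first_mat_carrier dims N0_mult_Kmat
          N0_mult_block_first_mat_kernel_trivial[OF \<open>0 < r\<close> \<open>\<nu> \<le> q\<close>] completion])
qed

end
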